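(* Let $(X,d)$ be a compact metric space, $k\geq1$, $T:\mathbb{Z}^k\times X\to X$ a continuous action, and $c>0$ such that any two distinct $x,y\in X$ satisfy $\sup_{u\in\mathbb{Z}^k}d(T^ux,T^uy)>c$. Fix an integer $l>0$ such that whenever $d(x,y)\geq c/2$ there is $u\in\mathbb{Z}^k$ with $|u|\leq l$ and $d(T^ux,T^uy)\geq c$, and fix $\alpha>1$ with $\alpha^l<2$. For $x\neq y$ let $\mathbf{n}(x,y)=\min\{n\geq0:\exists u\in\mathbb{Z}^k,\ |u|\leq n,\ d(T^ux,T^uy)\geq c\}$, let $\mathbf{n}(x,x)=\infty$, and set $\rho(x,y)=\alpha^{-\mathbf{n}(x,y)}$ (so $\rho(x,x)=0$). Then: (1) $\rho(x,y)=\rho(y,x)$; (2) $\rho(x,y)=0$ iff $x=y$; (3) $\rho(x,z)\leq2\max(\rho(x,y),\rho(y,z))$ for all $x,y,z$; (4) if $x_n\to x$ and $y_n\to y$ then $\limsup_{n\to\infty}\rho(x_n,y_n)\leq\rho(x,y)$; (5) the balls $B_r(x,\rho)=\{y:\rho(x,y)<r\}$ ($x\in X$, $r>0$) form an open base of the topology of $X$.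
   Context: $|u|$ denotes the norm of $u\in\mathbb{Z}^k$ (a fixed norm, e.g. Euclidean). Such an integer $l$ exists by expansiveness and compactness. *)

theory Defs
  imports "HOL-Analysis.Analysis" "HOL-Library.Extended_Nat" "HOL-Library.Liminf_Limsup" "HOL-Library.Function_Algebras"
begin

text \<open>Elements of Z^k are modelled as functions 'k => int for a finite index type 'k
 (so k = CARD('k) >= 1). The fixed norm is the Euclidean one.\<close>

definition znorm :: "('k::finite \<Rightarrow> int) \<Rightarrow> real" where
  "znorm u = sqrt (\<Sum>i\<in>UNIV. (real_of_int (u i))^2)"

definition cont_action :: "'a::metric_space set \<Rightarrow> (('k::finite \<Rightarrow> int) \<Rightarrow> 'a \<Rightarrow> 'a) \<Rightarrow> bool" where
  "cont_action X T \<longleftrightarrow>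
     (\<forall>u. T u ` X \<subseteq> X \<and> continuous_on X (T u)) \<and>
     (\<forall>x\<in>X. T 0 x = x) \<and>
     (\<forall>u v. \<forall>x\<in>X. T (u + v) x = T u (T v x))"

definition nn :: "(('k::finite \<Rightarrow> int) \<Rightarrow> 'a::metric_space \<Rightarrow> 'a) \<Rightarrow> real \<Rightarrow> 'a \<Rightarrow> 'a \<Rightarrow> enat" where
  "nn T c x y = (if x = y then \<infinity>
     else enat (LEAST n::nat. \<exists>u. znorm u \<le> real n \<and> dist (T u x) (T u y) \<ge> c))"

definition rho :: "(('k::finite \<Rightarrow> int) \<Rightarrow> 'a::metric_space \<Rightarrow> 'a) \<Rightarrow> real \<Rightarrow> real \<Rightarrow> 'a \<Rightarrow> 'a \<Rightarrow> real" where
  "rho T c \<alpha> x y = (case nn T c x y of \<infinity> \<Rightarrow> 0 | enat n \<Rightarrow> inverse (\<alpha> ^ n))"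

end

theory Submission imports Defs begin

text \<open>
  For the quasi-triangle
  inequality take such a u for x and z: it moves x and y, or y and z, at least c/2 apart, and
  at most l further steps reach distance c, so n(x,y) or n(y,z) is at most n(x,z) + l, a loss
  of a factor \<alpha>^l < 2 in rho. The condition n(x,y) \<ge> N is a finite conjunction of
  strict inequalities d(T^u x, T^u y) < c, hence open in (x,y): this gives upper
  semicontinuity and the openness of rho-balls. Conversely, the points at distance at least
  \<epsilon> from x form a compact set, covered by finitely many of the open sets where some
  T^u moves them more than c away from x; this bounds n(x,.) there, so a small rho-ball around
  x lies in the \<epsilon>-ball.
\<close>

lemma znorm_nonneg: "0 \<le> znorm u"
  by (simp add: znorm_def sum_nonneg)

lemma znorm_triangle: "znorm (u + v) \<le> znorm u + znorm v"
  using L2_set_triangle_ineq[of "\<lambda>i. real_of_int (u i)" "\<lambda>i. real_of_int (v i)" UNIV]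
  by (simp add: znorm_def L2_set_def)

lemma abs_le_znorm: "\<bar>real_of_int (u i)\<bar> \<le> znorm u"
  using member_le_L2_set[of UNIV i "\<lambda>i. \<bar>real_of_int (u i)\<bar>"]
  by (simp add: znorm_def L2_set_def)

lemma finite_znorm_le: "finite {u::'k::finite \<Rightarrow> int. znorm u \<le> r}"
proof (rule finite_subset)
  show "{u::'k \<Rightarrow> int. znorm u \<le> r} \<subseteq> Pi\<^sub>E UNIV (\<lambda>_. {-\<lceil>r\<rceil>..\<lceil>r\<rceil>})"
  proof
    fix u :: "'k \<Rightarrow> int"
    assume "u \<in> {u. znorm u \<le> r}"
    then have "\<bar>real_of_int (u i)\<bar> \<le> r" for i
      using abs_le_znorm[of u i] by simp
    then have "\<bar>u i\<bar> \<le> \<lceil>r\<rceil>" for i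
      by (metis ceiling_mono ceiling_of_int of_int_abs)
    then show "u \<in> Pi\<^sub>E UNIV (\<lambda>_. {-\<lceil>r\<rceil>..\<lceil>r\<rceil>})"
      by (auto simp: abs_le_iff minus_le_iff)
  qed
qed (simp add: finite_PiE)

lemma nn_commute: "nn T c x y = nn T c y x"
  by (simp add: nn_def dist_commute eq_commute)

lemma rho_commute: "rho T c \<alpha> x y = rho T c \<alpha> y x"
  by (simp add: rho_def nn_commute)

lemma rho_eq_0_iff: "\<alpha> \<noteq> 0 \<Longrightarrow> rho T c \<alpha> x y = 0 \<longleftrightarrow> x = y"
  by (simp add: rho_def nn_def)

lemma rho_nonneg: "0 \<le> \<alpha> \<Longrightarrow> 0 \<le> rho T c \<alpha> x y"
  by (simp add: rho_def split: enat.split)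

lemma nn_le_enat:
  assumes "c > 0" "znorm u \<le> real n" "c \<le> dist (T u x) (T u y)"
  shows "nn T c x y \<le> enat n"
proof -
  have "x \<noteq> y" using assms(1,3) by auto
  moreover have "(LEAST n. \<exists>u. znorm u \<le> real n \<and> c \<le> dist (T u x) (T u y)) \<le> n"
    using assms(2,3) by (intro Least_le) blast
  ultimately show ?thesis by (simp add: nn_def)
qed

lemma dist_less_if_nn_ge:
  assumes "c > 0" "enat N \<le> nn T c x y" "znorm u + 1 \<le> real N"
  shows "dist (T u x) (T u y) < c"
proof (rule ccontr)
  assume "\<not> ?thesis"
  then have "nn T c x y \<le> enat (N - 1)"
    using assms(1,3) znorm_nonneg[of u] by (intro nn_le_enat[of c u]) auto
  with assms(2) have "enat N \<le> enat (N - 1)" by (rule order_trans)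
  moreover have "N \<ge> 1"
    using assms(3) znorm_nonneg[of u] by linarith
  ultimately show False by simp
qed

lemma rho_le_if_nn_ge:
  assumes "\<alpha> \<ge> 1" "enat N \<le> nn T c x y"
  shows "rho T c \<alpha> x y \<le> inverse (\<alpha> ^ N)"
  using assms by (cases "nn T c x y") (auto simp: rho_def intro: le_imp_inverse_le power_increasing)

lemma rho_ge_if_nn_le:
  assumes "\<alpha> \<ge> 1" "nn T c x y \<le> enat N"
  shows "inverse (\<alpha> ^ N) \<le> rho T c \<alpha> x y"
  using assms by (cases "nn T c x y") (auto simp: rho_def intro: le_imp_inverse_le power_increasing)

lemma nn_ge_if_rho_less:
  assumes "\<alpha> > 1" "rho T c \<alpha> x y < r"
  obtains N where "enat N \<le> nn T c x y" "inverse (\<alpha> ^ N) < r"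
proof (cases "nn T c x y")
  case (enat m)
  then show ?thesis using assms(2) that[of m] by (simp add: rho_def)
next
  case infinity
  then have "r > 0" using assms(2) by (simp add: rho_def)
  obtain N where "inverse r < \<alpha> ^ N" using real_arch_pow[OF assms(1)] by blast
  then have "inverse (\<alpha> ^ N) < r"
    using \<open>r > 0\<close> by (metis inverse_inverse_eq inverse_positive_iff_positive less_imp_inverse_less)
  then show ?thesis using infinity that[of N] by simp
qed

locale expansive_action =
  fixes X :: "'a::metric_space set"
    and T :: "('k::finite \<Rightarrow> int) \<Rightarrow> 'a \<Rightarrow> 'a"
    and c :: real
  assumes compact: "compact X"
    and action: "cont_action X T"
    and c_pos: "c > 0"
    and expansive: "\<forall>x\<in>X. \<forall>y\<in>X. x \<noteq> y \<longrightarrow> (SUP u. dist (T u x) (T u y)) > c"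
begin

lemma maps_into: "x \<in> X \<Longrightarrow> T u x \<in> X"
  using action unfolding cont_action_def by blast

lemma continuous_on_T: "continuous_on X (T u)"
  using action unfolding cont_action_def by blast

lemma T_add: "x \<in> X \<Longrightarrow> T (u + v) x = T u (T v x)"
  using action unfolding cont_action_def by blast

lemma separating_element:
  assumes "x \<in> X" "y \<in> X" "x \<noteq> y"
  obtains u where "c < dist (T u x) (T u y)"
proof -
  obtain B where B: "\<forall>z\<in>X. dist x z \<le> B"
    using compact_imp_bounded[OF compact] bounded_any_center by blast
  have "dist (T u x) (T u y) \<le> 2 * B" for u
  proof -
    have "dist x (T u x) \<le> B" "dist x (T u y) \<le> B"
      using B maps_into assms by auto
    then show ?thesis using dist_triangle3[of "T u x" "T u y" x] by linarith
  qed
  then have "bdd_above (range (\<lambda>u. dist (T u x) (T u y)))"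
    by (intro bdd_aboveI2)
  moreover have "c < (SUP u. dist (T u x) (T u y))"
    using expansive assms by blast
  ultimately show ?thesis
    using that less_cSUP_iff by blast
qed

lemma nn_attained:
  assumes "x \<in> X" "y \<in> X" "x \<noteq> y"
  obtains m u where "nn T c x y = enat m" "znorm u \<le> real m" "c \<le> dist (T u x) (T u y)"
proof -
  define P where "P n \<longleftrightarrow> (\<exists>u. znorm u \<le> real n \<and> c \<le> dist (T u x) (T u y))" for n :: nat
  obtain u where "c < dist (T u x) (T u y)"
    using separating_element assms by blast
  then have "P (nat \<lceil>znorm u\<rceil>)"
    unfolding P_def by (intro exI[of _ u]) (simp add: real_nat_ceiling_ge)
  then have "P (LEAST n. P n)" by (rule LeastI)
  then show ?thesis
    using assms(3) that unfolding P_def by (auto simp: nn_def)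
qed

lemma nn_ge_if_dist_less:
  assumes "x \<in> X" "y \<in> X" "\<forall>u. znorm u + 1 \<le> real N \<longrightarrow> dist (T u x) (T u y) < c"
  shows "enat N \<le> nn T c x y"
proof (cases "x = y")
  case False
  then obtain m u where m: "nn T c x y = enat m" "znorm u \<le> real m" "c \<le> dist (T u x) (T u y)"
    using nn_attained assms(1,2) by blast
  then have "\<not> znorm u + 1 \<le> real N" using assms(3) by force
  then show ?thesis using m(1,2) by simp
qed (simp add: nn_def)

lemma eventually_nn_ge:
  assumes "eventually (\<lambda>z. f z \<in> X \<and> g z \<in> X) F"
    and "(f \<longlongrightarrow> x) F" "(g \<longlongrightarrow> y) F" "x \<in> X" "y \<in> X"
    and "enat N \<le> nn T c x y"
  shows "eventually (\<lambda>z. enat N \<le> nn T c (f z) (g z)) F"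
proof -
  let ?S = "{u. znorm u \<le> real N - 1}"
  have "eventually (\<lambda>z. dist (T u (f z)) (T u (g z)) < c) F" if "u \<in> ?S" for u
  proof (rule order_tendstoD)
    show "((\<lambda>z. dist (T u (f z)) (T u (g z))) \<longlongrightarrow> dist (T u x) (T u y)) F"
      by (intro tendsto_dist continuous_on_tendsto_compose[OF continuous_on_T] assms(2-5))
        (use assms(1) in \<open>auto elim: eventually_mono\<close>)
    show "dist (T u x) (T u y) < c"
      using that assms(6) c_pos by (intro dist_less_if_nn_ge) auto
  qed
  then have "eventually (\<lambda>z. \<forall>u\<in>?S. dist (T u (f z)) (T u (g z)) < c) F"
    by (intro eventually_ball_finite finite_znorm_le) blast
  with assms(1) show ?thesis
    by eventually_elim (intro nn_ge_if_dist_less, auto)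
qed

lemma eventually_rho_less:
  assumes "\<alpha> > 1"
    and "eventually (\<lambda>z. f z \<in> X \<and> g z \<in> X) F"
    and "(f \<longlongrightarrow> x) F" "(g \<longlongrightarrow> y) F" "x \<in> X" "y \<in> X"
    and "rho T c \<alpha> x y < r"
  shows "eventually (\<lambda>z. rho T c \<alpha> (f z) (g z) < r) F"
proof -
  obtain N where N: "enat N \<le> nn T c x y" "inverse (\<alpha> ^ N) < r"
    using nn_ge_if_rho_less assms(1,7) by blast
  have "eventually (\<lambda>z. enat N \<le> nn T c (f z) (g z)) F"
    using eventually_nn_ge assms(2-6) N(1) by blast
  then show ?thesis
  proof (rule eventually_mono)
    fix z
    assume "enat N \<le> nn T c (f z) (g z)"
    then have "rho T c \<alpha> (f z) (g z) \<le> inverse (\<alpha> ^ N)"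
      using assms(1) by (intro rho_le_if_nn_ge) auto
    with N(2) show "rho T c \<alpha> (f z) (g z) < r" by linarith
  qed
qed

lemma limsup_rho_le:
  assumes "\<alpha> > 1" "\<forall>n. xs n \<in> X \<and> ys n \<in> X" "x \<in> X" "y \<in> X"
    and "xs \<longlonglongrightarrow> x" "ys \<longlonglongrightarrow> y"
  shows "limsup (\<lambda>n. ereal (rho T c \<alpha> (xs n) (ys n))) \<le> ereal (rho T c \<alpha> x y)"
  unfolding Limsup_le_iff
proof (intro allI impI)
  fix r :: ereal
  assume r: "ereal (rho T c \<alpha> x y) < r"
  show "eventually (\<lambda>n. ereal (rho T c \<alpha> (xs n) (ys n)) < r) sequentially"
  proof (cases r)
    case (real r')
    have "eventually (\<lambda>n. rho T c \<alpha> (xs n) (ys n) < r') sequentially"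
      by (rule eventually_rho_less[OF assms(1) _ assms(5,6,3,4)]) (use assms(2) r real in auto)
    then show ?thesis using real by simp
  qed (use r in auto)
qed

lemma openin_rho_ball:
  assumes "\<alpha> > 1" "x \<in> X"
  shows "openin (top_of_set X) {y\<in>X. rho T c \<alpha> x y < r}"
  unfolding openin_euclidean_subtopology_iff
proof (intro conjI ballI)
  fix y
  assume y: "y \<in> {y\<in>X. rho T c \<alpha> x y < r}"
  have "eventually (\<lambda>z. rho T c \<alpha> x z < r) (at y within X)"
  proof (rule eventually_rho_less[OF assms(1), where f = "\<lambda>_. x" and g = "\<lambda>z. z" and x = x and y = y])
    show "eventually (\<lambda>z. x \<in> X \<and> z \<in> X) (at y within X)"
      using assms(2) by (simp add: eventually_at_filter)
  qed (use assms y in auto)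
  then obtain d where "d > 0" "\<forall>z\<in>X. z \<noteq> y \<and> dist z y < d \<longrightarrow> rho T c \<alpha> x z < r"
    by (auto simp: eventually_at)
  with y show "\<exists>d>0. \<forall>z\<in>X. dist z y < d \<longrightarrow> z \<in> {y\<in>X. rho T c \<alpha> x y < r}"
    by (metis (mono_tags, lifting) mem_Collect_eq)
qed auto

lemma nn_bounded_on_compact:
  assumes "compact K" "K \<subseteq> X" "x \<in> X" "x \<notin> K"
  obtains N where "\<forall>y\<in>K. nn T c x y \<le> enat N"
proof -
  have "\<forall>u. \<exists>A. open A \<and> A \<inter> X = (\<lambda>y. dist (T u x) (T u y)) -` {c<..} \<inter> X"
  proof
    fix u
    have "continuous_on X (\<lambda>y. dist (T u x) (T u y))"
      by (intro continuous_on_dist continuous_on_const continuous_on_T)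
    then show "\<exists>A. open A \<and> A \<inter> X = (\<lambda>y. dist (T u x) (T u y)) -` {c<..} \<inter> X"
      unfolding continuous_on_open_invariant by simp
  qed
  then obtain A where "\<forall>u. open (A u) \<and> A u \<inter> X = (\<lambda>y. dist (T u x) (T u y)) -` {c<..} \<inter> X"
    by (rule choice[THEN exE])
  then have A: "\<And>u. open (A u)" "\<And>u. A u \<inter> X = (\<lambda>y. dist (T u x) (T u y)) -` {c<..} \<inter> X"
    by simp_all
  have "K \<subseteq> (\<Union>u. A u)"
  proof
    fix y
    assume "y \<in> K"
    then obtain u where "c < dist (T u x) (T u y)"
      using separating_element assms by blast
    then show "y \<in> (\<Union>u. A u)" using A(2)[of u] \<open>y \<in> K\<close> assms(2) by blast
  qed
  then obtain C where C: "finite C" "K \<subseteq> (\<Union>u\<in>C. A u)"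
    by (rule compactE_image[OF assms(1) A(1)]) simp
  have "nn T c x y \<le> enat (nat \<lceil>\<Sum>u\<in>C. znorm u\<rceil>)" if y: "y \<in> K" for y
  proof -
    obtain u where u: "u \<in> C" "y \<in> A u" using C y by blast
    have "znorm u \<le> (\<Sum>u\<in>C. znorm u)"
      using C(1) u(1) by (intro member_le_sum) (auto simp: znorm_nonneg)
    then have "znorm u \<le> real (nat \<lceil>\<Sum>u\<in>C. znorm u\<rceil>)"
      using real_nat_ceiling_ge[of "\<Sum>u\<in>C. znorm u"] by linarith
    moreover have "c < dist (T u x) (T u y)" using A(2)[of u] u(2) y assms(2) by blast
    ultimately show ?thesis
      using c_pos by (intro nn_le_enat[of c u]) auto
  qed
  then show ?thesis using that by blast
qed

lemma rho_ball_subset_openin: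
  assumes "\<alpha> > 1" "openin (top_of_set X) U" "x \<in> U"
  obtains r where "r > 0" "{y\<in>X. rho T c \<alpha> x y < r} \<subseteq> U"
proof -
  have x: "x \<in> X" using assms(2,3) openin_imp_subset by blast
  obtain \<epsilon> where "\<epsilon> > 0" and \<epsilon>: "\<forall>y\<in>X. dist y x < \<epsilon> \<longrightarrow> y \<in> U"
    using assms(2,3) unfolding openin_euclidean_subtopology_iff by blast
  have "compact (X - ball x \<epsilon>)" using compact by (rule compact_diff) simp
  moreover have "x \<notin> X - ball x \<epsilon>" using \<open>\<epsilon> > 0\<close> by simp
  ultimately obtain N where N: "\<forall>y\<in>X - ball x \<epsilon>. nn T c x y \<le> enat N"
    using nn_bounded_on_compact x by blast
  have "{y\<in>X. rho T c \<alpha> x y < inverse (\<alpha> ^ N)} \<subseteq> U"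
  proof
    fix y
    assume y: "y \<in> {y\<in>X. rho T c \<alpha> x y < inverse (\<alpha> ^ N)}"
    have "y \<in> ball x \<epsilon>"
    proof (rule ccontr)
      assume "y \<notin> ball x \<epsilon>"
      then have "inverse (\<alpha> ^ N) \<le> rho T c \<alpha> x y"
        using y N assms(1) by (intro rho_ge_if_nn_le) auto
      with y show False by simp
    qed
    then show "y \<in> U" using \<epsilon> y by (simp add: dist_commute)
  qed
  moreover have "inverse (\<alpha> ^ N) > 0" using assms(1) by simp
  ultimately show ?thesis using that by blast
qed

context
  fixes l :: nat
  assumes l_prop: "\<forall>x\<in>X. \<forall>y\<in>X. dist x y \<ge> c / 2 \<longrightarrow>
                     (\<exists>u. znorm u \<le> real l \<and> dist (T u x) (T u y) \<ge> c)"
begin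

lemma nn_le_shift:
  assumes "x \<in> X" "y \<in> X" "znorm u \<le> real m" "c / 2 \<le> dist (T u x) (T u y)"
  shows "nn T c x y \<le> enat (m + l)"
proof -
  have "T u x \<in> X" "T u y \<in> X" using maps_into assms(1,2) by auto
  then obtain v where v: "znorm v \<le> real l" "c \<le> dist (T v (T u x)) (T v (T u y))"
    using l_prop assms(4) by blast
  have "znorm (v + u) \<le> real (m + l)"
    using znorm_triangle[of v u] v(1) assms(3) by simp
  moreover have "c \<le> dist (T (v + u) x) (T (v + u) y)"
    using v(2) T_add assms(1,2) by simp
  ultimately show ?thesis using c_pos by (rule nn_le_enat[rotated])
qed

lemma rho_quasi_triangle:
  assumes "\<alpha> > 1" "\<alpha> ^ l < 2" "x \<in> X" "y \<in> X" "z \<in> X"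
  shows "rho T c \<alpha> x z \<le> 2 * max (rho T c \<alpha> x y) (rho T c \<alpha> y z)"
proof (cases "x = z")
  case True
  then have "rho T c \<alpha> x z = 0" using assms(1) by (simp add: rho_eq_0_iff)
  then show ?thesis using assms(1) rho_nonneg[of \<alpha> T c x y] by simp
next
  case False
  then obtain m u where m: "nn T c x z = enat m" "znorm u \<le> real m" "c \<le> dist (T u x) (T u z)"
    using nn_attained assms(3,5) by blast
  have "c / 2 \<le> dist (T u x) (T u y) \<or> c / 2 \<le> dist (T u y) (T u z)"
    using m(3) dist_triangle[of "T u x" "T u z" "T u y"] by linarith
  then have "nn T c x y \<le> enat (m + l) \<or> nn T c y z \<le> enat (m + l)"
    using nn_le_shift m(2) assms(3-5) by blast
  then have "inverse (\<alpha> ^ (m + l)) \<le> rho T c \<alpha> x y \<or> inverse (\<alpha> ^ (m + l)) \<le> rho T c \<alpha> y z"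
    using rho_ge_if_nn_le[OF less_imp_le[OF assms(1)]] by blast
  then have "inverse (\<alpha> ^ (m + l)) \<le> max (rho T c \<alpha> x y) (rho T c \<alpha> y z)"
    by (auto simp: le_max_iff_disj)
  moreover have "rho T c \<alpha> x z = \<alpha> ^ l * inverse (\<alpha> ^ (m + l))"
    using m(1) assms(1) by (simp add: rho_def power_add)
  moreover have "\<alpha> ^ l * inverse (\<alpha> ^ (m + l)) \<le> 2 * inverse (\<alpha> ^ (m + l))"
    using assms(1,2) by (intro mult_right_mono) auto
  ultimately show ?thesis by linarith
qed

end

end

theorem lemma4p3:
  fixes X :: "'a::metric_space set"
    and T :: "('k::finite \<Rightarrow> int) \<Rightarrow> 'a \<Rightarrow> 'a"
    and c \<alpha> :: real and l :: nat
  assumes "compact X"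
    and "cont_action X T"
    and "c > 0"
    and expansive: "\<forall>x\<in>X. \<forall>y\<in>X. x \<noteq> y \<longrightarrow> (SUP u. dist (T u x) (T u y)) > c"
    and "l > 0"
    and l_prop: "\<forall>x\<in>X. \<forall>y\<in>X. dist x y \<ge> c / 2 \<longrightarrow>
                   (\<exists>u. znorm u \<le> real l \<and> dist (T u x) (T u y) \<ge> c)"
    and "\<alpha> > 1" and "\<alpha> ^ l < 2"
  shows "(\<forall>x\<in>X. \<forall>y\<in>X. rho T c \<alpha> x y = rho T c \<alpha> y x)
    \<and> (\<forall>x\<in>X. \<forall>y\<in>X. rho T c \<alpha> x y = 0 \<longleftrightarrow> x = y)
    \<and> (\<forall>x\<in>X. \<forall>y\<in>X. \<forall>z\<in>X. rho T c \<alpha> x z \<le> 2 * max (rho T c \<alpha> x y) (rho T c \<alpha> y z))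
    \<and> (\<forall>xs ys x y. (\<forall>n. xs n \<in> X \<and> ys n \<in> X) \<longrightarrow> x \<in> X \<longrightarrow> y \<in> X \<longrightarrow>
          xs \<longlonglongrightarrow> x \<longrightarrow> ys \<longlonglongrightarrow> y \<longrightarrow>
          limsup (\<lambda>n. ereal (rho T c \<alpha> (xs n) (ys n))) \<le> ereal (rho T c \<alpha> x y))
    \<and> (\<forall>x\<in>X. \<forall>r>0. openin (top_of_set X) {y\<in>X. rho T c \<alpha> x y < r})
    \<and> (\<forall>U. openin (top_of_set X) U \<longrightarrow>
          (\<forall>x\<in>U. \<exists>z\<in>X. \<exists>r>0. x \<in> {y\<in>X. rho T c \<alpha> z y < r} \<and> {y\<in>X. rho T c \<alpha> z y < r} \<subseteq> U))"
proof -
  interpret expansive_action X T c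
    using assms(1-4) by unfold_locales
  have "\<alpha> \<noteq> 0" using \<open>\<alpha> > 1\<close> by simp
  have base: "\<exists>z\<in>X. \<exists>r>0. x \<in> {y\<in>X. rho T c \<alpha> z y < r} \<and> {y\<in>X. rho T c \<alpha> z y < r} \<subseteq> U"
    if U: "openin (top_of_set X) U" and x: "x \<in> U" for U x
  proof -
    obtain r where "r > 0" "{y\<in>X. rho T c \<alpha> x y < r} \<subseteq> U"
      using rho_ball_subset_openin[OF \<open>\<alpha> > 1\<close> U x] by blast
    moreover have "x \<in> X" using U x openin_imp_subset by blast
    ultimately show ?thesis
      using rho_eq_0_iff[OF \<open>\<alpha> \<noteq> 0\<close>, of T c x x] by (intro bexI[of _ x] exI[of _ r]) auto
  qed
  show ?thesis
    by (intro conjI ballI allI impI rho_commute rho_eq_0_iff[OF \<open>\<alpha> \<noteq> 0\<close>]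
        rho_quasi_triangle[OF l_prop assms(7,8)] limsup_rho_le[OF assms(7)]
        openin_rho_ball[OF assms(7)] base) auto
qed

end
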